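(* Under the Setting and Assumptions A1–A4 in the context, $\hat\beta\xrightarrow{P}\tilde\beta^*$ as $L\to\infty$.
   Context: Setting. There are $M$ items indexed by $[M]$ and covariate dimension $d$; $M,d$ fixed. Parameter $\tilde\beta=(\beta_{01},\dots,\beta_{0M},\beta_1^\top,\dots,\beta_M^\top)^\top\in\mathbb R^{M+Md}$. For an ordered pair $a=(i,j)$ and $x\in\mathbb R^d$, $\tilde x_{a}(x)=(e_j^\top, (e_j\otimes x)^\top)^\top-(e_i^\top,(e_i\otimes x)^\top)^\top$, $e_i$ the standard basis of $\mathbb R^M$. $\sigma(z)=(1+e^{-z})^{-1}$. Data: for $l=1,\dots,L$, deterministic $x_l\in\mathbb R^d$; pair $a_l$ drawn independently from $\mathcal E$ with probabilities $p_a>0$, $\sum_a p_a=1$; independently across $l$, $y_l\in\{0,1\}$ with $P(y_l=1\mid a_l)=\sigma(\tilde\beta^{*\top}\tilde x_{a_l}(x_l))$. Write $\tilde x_{a_l}=\tilde x_{a_l}(x_l)$. $\ell(\tilde\beta)=-\sum_{l}\bigl[y_l\log\sigma(\tilde\beta^\top\tilde x_{a_l})+(1-y_l)\log(1-\sigma(\tilde\beta^\top\tilde x_{a_l}))\bigr]$. $\Theta=\{\tilde\beta:\sum_i\beta_{0i}=0,\ \sum_i\beta_i=0\}$. $\hat\beta=\arg\min_{\tilde\beta\in\Theta}\ell(\tilde\beta)$; $\tilde\beta^*\in\Theta$ is the true parameter. $\mathcal I_L(\tilde\beta)=\sum_{l=1}^L\sum_{a\in\mathcal E}p_a\sigma(\tilde\beta^\top\tilde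 x_a(x_l))(1-\sigma(\tilde\beta^\top\tilde x_a(x_l)))\tilde x_a(x_l)\tilde x_a(x_l)^\top$. Assumptions. (A1) The graph on $[M]$ with edge set $\mathcal E$ is connected. (A2) The matrix with rows $((e_j\otimes x_l)-(e_i\otimes x_l))^\top$, $a_l=(i,j)$, has full column rank. (A3) $\|\tilde x_a(x_l)\|_2<B_2<\infty$ for all $l$, $a\in\mathcal E$, and $\sup_l|\tilde\beta^{*\top}\tilde x_{a_l}|<\infty$. (A4) $\frac1L\mathcal I_L(\tilde\beta^* )\to\bar{\mathcal I}$, positive definite on $\Theta$. *)

theory Defs
  imports "HOL-Probability.Probability"
begin

text \<open>Items are indexed by a finite type 'm (so M = CARD('m)), covariates live in
real^'d (d = CARD('d)).  The parameter space R^(M+Md) is real^('m + 'm \<times> 'd):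
component Inl i is beta_0i, component Inr (i,t) is the t-th coordinate of beta_i.\<close>

type_synonym ('m, 'd) param = "real ^ ('m + 'm \<times> 'd)"

definition sigmoid :: "real \<Rightarrow> real" where
  "sigmoid z = 1 / (1 + exp (- z))"

definition ebasis :: "'m::finite \<Rightarrow> real ^ 'm" where
  "ebasis j = (\<chi> i. if i = j then 1 else 0)"

definition kron :: "real ^ 'm::finite \<Rightarrow> real ^ 'd::finite \<Rightarrow> real ^ ('m \<times> 'd)" where
  "kron e x = (\<chi> k. e $ fst k * x $ snd k)"

definition stack :: "real ^ 'm::finite \<Rightarrow> real ^ ('m \<times> 'd::finite) \<Rightarrow> real ^ ('m + 'm \<times> 'd)" where
  "stack u v = (\<chi> k. case k of Inl i \<Rightarrow> u $ i | Inr p \<Rightarrow> v $ p)"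

definition xt :: "'m::finite \<times> 'm \<Rightarrow> real ^ 'd::finite \<Rightarrow> real ^ ('m + 'm \<times> 'd)" where
  "xt a x = stack (ebasis (snd a)) (kron (ebasis (snd a)) x)
          - stack (ebasis (fst a)) (kron (ebasis (fst a)) x)"

definition Theta :: "(('m::finite), ('d::finite)) param set" where
  "Theta = {b. (\<Sum>i\<in>UNIV. b $ Inl i) = 0 \<and> (\<forall>t. (\<Sum>i\<in>UNIV. b $ Inr (i, t)) = 0)}"

definition loss :: "(nat \<Rightarrow> 'w \<Rightarrow> 'm::finite \<times> 'm) \<Rightarrow> (nat \<Rightarrow> 'w \<Rightarrow> bool)
    \<Rightarrow> (nat \<Rightarrow> real ^ 'd::finite) \<Rightarrow> nat \<Rightarrow> 'w \<Rightarrow> ('m, 'd) param \<Rightarrow> real" where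
  "loss A Y x L w b = - (\<Sum>l\<in>{1..L}.
       of_bool (Y l w) * ln (sigmoid (b \<bullet> xt (A l w) (x l)))
     + (1 - of_bool (Y l w)) * ln (1 - sigmoid (b \<bullet> xt (A l w) (x l))))"

definition is_mle :: "(nat \<Rightarrow> 'w \<Rightarrow> 'm::finite \<times> 'm) \<Rightarrow> (nat \<Rightarrow> 'w \<Rightarrow> bool)
    \<Rightarrow> (nat \<Rightarrow> real ^ 'd::finite) \<Rightarrow> nat \<Rightarrow> 'w \<Rightarrow> ('m, 'd) param \<Rightarrow> bool" where
  "is_mle A Y x L w b \<longleftrightarrow> b \<in> Theta \<and> (\<forall>b'\<in>Theta. loss A Y x L w b \<le> loss A Y x L w b')"

definition outer :: "real ^ 'k::finite \<Rightarrow> real ^ 'k \<Rightarrow> real ^ 'k ^ 'k" where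
  "outer u v = (\<chi> r c. u $ r * v $ c)"

definition info :: "('m::finite \<times> 'm \<Rightarrow> real) \<Rightarrow> ('m \<times> 'm) set \<Rightarrow> (nat \<Rightarrow> real ^ 'd::finite)
    \<Rightarrow> nat \<Rightarrow> ('m, 'd) param \<Rightarrow> real ^ ('m + 'm \<times> 'd) ^ ('m + 'm \<times> 'd)" where
  "info p E x L b = (\<Sum>l\<in>{1..L}. \<Sum>a\<in>E.
      (p a * sigmoid (b \<bullet> xt a (x l)) * (1 - sigmoid (b \<bullet> xt a (x l))))
        *\<^sub>R outer (xt a (x l)) (xt a (x l)))"

definition graph_connected :: "('m \<times> 'm) set \<Rightarrow> bool" where
  "graph_connected E \<longleftrightarrow> (\<forall>i j. (i, j) \<in> (E \<union> E\<inverse>)\<^sup>*)"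

text \<open>(A2) the design rows (e_j \<otimes> x_l - e_i \<otimes> x_l), a_l = (i,j), l = 1..L, have full
column rank, read on the constraint subspace sum_i beta_i = 0.\<close>
definition design_full_rank :: "(nat \<Rightarrow> 'm::finite \<times> 'm) \<Rightarrow> (nat \<Rightarrow> real ^ 'd::finite) \<Rightarrow> nat \<Rightarrow> bool" where
  "design_full_rank a x L \<longleftrightarrow>
     (\<forall>v :: real ^ ('m \<times> 'd). (\<forall>t. (\<Sum>i\<in>UNIV. v $ (i, t)) = 0) \<and>
        (\<forall>l\<in>{1..L}. (kron (ebasis (snd (a l))) (x l) - kron (ebasis (fst (a l))) (x l)) \<bullet> v = 0)
        \<longrightarrow> v = 0)"

end

theory Submission
  imports Defs
begin

text \<open>The negative log-likelihood is convex, so it suffices to show that with probability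
  tending to one it is larger on the sphere of radius \<open>\<epsilon>\<close> around \<open>bstar\<close> (within \<open>Theta\<close>)
  than at \<open>bstar\<close>: then a minimiser exists and every minimiser lies in the ball.
  A second-order expansion with \<open>v = b - bstar\<close> gives
  \<open>loss b - loss bstar \<ge> v \<bullet> (W *v v) / (2 * exp R) - v \<bullet> S\<close>, where \<open>S\<close> is the score and
  \<open>W\<close> the observed information at \<open>bstar\<close>, sums of \<open>L\<close> independent bounded terms with
  means \<open>0\<close> and \<open>info\<close>. By Hoeffding's inequality, entrywise, \<open>S\<close> and \<open>W - info\<close> are
  \<open>o(L)\<close> with probability tending to one, while by (A4) \<open>info\<close> grows like \<open>L\<close> on
  \<open>Theta\<close>; so the quadratic term wins.\<close>

section \<open>The logistic function\<close>

definition softplus :: "real \<Rightarrow> real" where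
  "softplus t = ln (1 + exp t)"

definition sigmoid_deriv :: "real \<Rightarrow> real" where
  "sigmoid_deriv t = sigmoid t * (1 - sigmoid t)"

lemma one_plus_exp_pos: "0 < 1 + exp (t :: real)"
  using exp_gt_zero[of t] by linarith

lemma sigmoid_exp: "sigmoid t = exp t / (1 + exp t)"
  using one_plus_exp_pos[of t] unfolding sigmoid_def exp_minus by (simp add: field_simps)

lemma one_minus_sigmoid: "1 - sigmoid t = 1 / (1 + exp t)"
  using one_plus_exp_pos[of t] unfolding sigmoid_exp by (simp add: field_simps)

lemma sigmoid_pos: "0 < sigmoid t"
  unfolding sigmoid_def by (simp add: add_pos_pos)

lemma sigmoid_less_1: "sigmoid t < 1"
  unfolding sigmoid_def by (simp add: add_pos_pos)

lemma mono_sigmoid: "mono sigmoid"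
  unfolding sigmoid_def by (intro monoI) (simp add: add_pos_pos frac_le)

lemma neg_log_likelihood_sigmoid:
  "- (of_bool y * ln (sigmoid t) + (1 - of_bool y) * ln (1 - sigmoid t)) = softplus t - of_bool y * t"
proof -
  have "ln (sigmoid t) = t - softplus t" and "ln (1 - sigmoid t) = - softplus t"
    unfolding sigmoid_exp softplus_def one_minus_sigmoid[unfolded sigmoid_exp]
    using one_plus_exp_pos[of t] by (simp_all add: ln_div)
  then show ?thesis by (simp add: algebra_simps)
qed

lemma DERIV_softplus: "DERIV softplus t :> sigmoid t"
  unfolding softplus_def[abs_def] sigmoid_exp
  by (rule derivative_eq_intros refl | use one_plus_exp_pos[of t] in simp)+

lemma DERIV_sigmoid: "DERIV sigmoid t :> sigmoid_deriv t"
proof -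
  have pos: "1 + exp t \<noteq> 0"
    using one_plus_exp_pos[of t] by simp
  have "DERIV (\<lambda>t. exp t / (1 + exp t)) t
      :> (exp t * (1 + exp t) - exp t * (0 + exp t)) / ((1 + exp t) * (1 + exp t))"
    by (intro DERIV_divide DERIV_add DERIV_const DERIV_exp pos)
  also have "(exp t * (1 + exp t) - exp t * (0 + exp t)) / ((1 + exp t) * (1 + exp t)) = sigmoid_deriv t"
    using pos unfolding sigmoid_deriv_def one_minus_sigmoid sigmoid_exp by (simp add: field_simps)
  finally show ?thesis
    unfolding sigmoid_exp[abs_def] .
qed

lemma sigmoid_deriv_nonneg: "0 \<le> sigmoid_deriv t"
  unfolding sigmoid_deriv_def using sigmoid_pos[of t] sigmoid_less_1[of t] by simp

lemma sigmoid_deriv_le: "sigmoid_deriv t \<le> 1 / 4"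
  unfolding sigmoid_deriv_def using mult_const_minus_self_real_le[of "sigmoid t" 1] by simp

lemma sigmoid_deriv_lower_bound:
  assumes "\<bar>t\<bar> \<le> R"
  shows "1 / (4 * exp R) \<le> sigmoid_deriv t"
proof -
  have "sigmoid_deriv t = 1 / (exp t + 2 + exp (- t))"
    using one_plus_exp_pos[of t] unfolding sigmoid_deriv_def one_minus_sigmoid sigmoid_exp exp_minus
    by (simp add: field_simps power2_eq_square)
  moreover have "exp t \<le> exp R" "exp (- t) \<le> exp R" "1 \<le> exp R"
    using assms by auto
  then have "exp t + 2 + exp (- t) \<le> 4 * exp R"
    by linarith
  ultimately show ?thesis by (simp add: frac_le add_pos_pos)
qed

lemma convex_on_softplus: "convex_on UNIV softplus"
  by (rule convex_on_realI[where f' = sigmoid]) (auto intro: DERIV_softplus monoD[OF mono_sigmoid])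

lemma continuous_on_softplus: "continuous_on S softplus"
  by (meson DERIV_isCont DERIV_softplus continuous_at_imp_continuous_on)

lemma softplus_second_order_lower_bound:
  assumes "\<bar>t\<bar> \<le> R" and "\<bar>t + u\<bar> \<le> R"
  shows "u\<^sup>2 / (8 * exp R) \<le> softplus (t + u) - softplus t - sigmoid t * u"
proof (cases "u = 0")
  case False
  define diff :: "nat \<Rightarrow> real \<Rightarrow> real"
    where "diff n = (if n = 0 then softplus else if n = 1 then sigmoid else sigmoid_deriv)" for n
  have "\<exists>s. (if t + u < t then t + u < s \<and> s < t else t < s \<and> s < t + u) \<and>
      softplus (t + u) = (\<Sum>m<2. diff m t / fact m * (t + u - t) ^ m) + diff 2 s / fact 2 * (t + u - t)\<^sup>2"
  proof (rule Taylor[where a = "- R" and b = R])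
    show "\<forall>m s. m < 2 \<and> - R \<le> s \<and> s \<le> R \<longrightarrow> DERIV (diff m) s :> diff (Suc m) s"
    proof (intro allI impI)
      fix m :: nat and s :: real assume "m < 2 \<and> - R \<le> s \<and> s \<le> R"
      then consider "m = 0" | "m = 1" by linarith
      then show "DERIV (diff m) s :> diff (Suc m) s"
        by cases (simp_all add: diff_def DERIV_softplus DERIV_sigmoid)
    qed
  next
    show "diff 0 = softplus" by (simp add: diff_def)
  next
    show "- R \<le> t" "t \<le> R" "- R \<le> t + u" "t + u \<le> R" "t + u \<noteq> t"
      using assms False by linarith+
  qed simp
  then obtain s where between: "if t + u < t then t + u < s \<and> s < t else t < s \<and> s < t + u"
      and expansion: "softplus (t + u) = (\<Sum>m<2. diff m t / fact m * (t + u - t) ^ m) + diff 2 s / fact 2 * (t + u - t)\<^sup>2"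
    by blast
  have s: "\<bar>s\<bar> \<le> R"
    using between assms by (auto split: if_splits)
  have taylor: "softplus (t + u) - softplus t - sigmoid t * u = sigmoid_deriv s / 2 * u\<^sup>2"
    using expansion by (simp add: diff_def eval_nat_numeral)
  have "u\<^sup>2 / (8 * exp R) = 1 / (4 * exp R) / 2 * u\<^sup>2"
    by simp
  also have "\<dots> \<le> sigmoid_deriv s / 2 * u\<^sup>2"
    using sigmoid_deriv_lower_bound[OF s] by (intro mult_right_mono divide_right_mono) auto
  finally show ?thesis
    unfolding taylor .
qed simp

section \<open>Loss, score and observed information\<close>

text \<open>\<open>score\<close> is minus the gradient of \<open>loss\<close>, and \<open>obs_info\<close> is its Hessian.\<close>

definition score :: "(nat \<Rightarrow> 'w \<Rightarrow> 'm::finite \<times> 'm) \<Rightarrow> (nat \<Rightarrow> 'w \<Rightarrow> bool)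
    \<Rightarrow> (nat \<Rightarrow> real ^ 'd::finite) \<Rightarrow> nat \<Rightarrow> 'w \<Rightarrow> ('m, 'd) param \<Rightarrow> ('m, 'd) param" where
  "score A Y x L w b = (\<Sum>l\<in>{1..L}.
      (of_bool (Y l w) - sigmoid (b \<bullet> xt (A l w) (x l))) *\<^sub>R xt (A l w) (x l))"

definition obs_info :: "(nat \<Rightarrow> 'w \<Rightarrow> 'm::finite \<times> 'm) \<Rightarrow> (nat \<Rightarrow> real ^ 'd::finite) \<Rightarrow> nat \<Rightarrow> 'w
    \<Rightarrow> ('m, 'd) param \<Rightarrow> real ^ ('m + 'm \<times> 'd) ^ ('m + 'm \<times> 'd)" where
  "obs_info A x L w b = (\<Sum>l\<in>{1..L}.
      sigmoid_deriv (b \<bullet> xt (A l w) (x l)) *\<^sub>R outer (xt (A l w) (x l)) (xt (A l w) (x l)))"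

lemma score_component:
  "score A Y x L w b $ k =
    (\<Sum>l\<in>{1..L}. (of_bool (Y l w) - sigmoid (b \<bullet> xt (A l w) (x l))) * xt (A l w) (x l) $ k)"
  unfolding score_def by simp

lemma obs_info_component:
  "obs_info A x L w b $ i $ j =
    (\<Sum>l\<in>{1..L}. sigmoid_deriv (b \<bullet> xt (A l w) (x l)) * (xt (A l w) (x l) $ i * xt (A l w) (x l) $ j))"
  unfolding obs_info_def outer_def by simp

lemma info_component:
  "info p E x L b $ i $ j =
    (\<Sum>l\<in>{1..L}. \<Sum>a\<in>E. p a * sigmoid_deriv (b \<bullet> xt a (x l)) * (xt a (x l) $ i * xt a (x l) $ j))"
  unfolding info_def outer_def sigmoid_deriv_def by (simp add: mult.assoc)

lemma score_cong:
  "\<forall>l\<in>{1..L}. A l w = A l w' \<and> Y l w = Y l w' \<Longrightarrow> score A Y x L w b = score A Y x L w' b"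
  unfolding score_def by (auto intro!: sum.cong)

lemma obs_info_cong:
  "\<forall>l\<in>{1..L}. A l w = A l w' \<Longrightarrow> obs_info A x L w b = obs_info A x L w' b"
  unfolding obs_info_def by (auto intro!: sum.cong)

lemma loss_softplus:
  "loss A Y x L w b =
    (\<Sum>l\<in>{1..L}. softplus (b \<bullet> xt (A l w) (x l)) - of_bool (Y l w) * (b \<bullet> xt (A l w) (x l)))"
  unfolding loss_def sum_negf[symmetric] neg_log_likelihood_sigmoid ..

lemma convex_on_loss:
  fixes A :: "nat \<Rightarrow> 'w \<Rightarrow> 'm::finite \<times> 'm" and x :: "nat \<Rightarrow> real ^ 'd::finite"
  shows "convex_on UNIV (loss A Y x L w)"
proof (rule convex_onI)
  fix s :: real and b b' :: "('m, 'd) param" assume s: "0 < s" "s < 1"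
  have "softplus (((1 - s) *\<^sub>R b + s *\<^sub>R b') \<bullet> z)
      \<le> (1 - s) * softplus (b \<bullet> z) + s * softplus (b' \<bullet> z)" for z
    using convex_onD[OF convex_on_softplus, of s "b \<bullet> z" "b' \<bullet> z"] s by (simp add: inner_add_left)
  then show "loss A Y x L w ((1 - s) *\<^sub>R b + s *\<^sub>R b') \<le> (1 - s) * loss A Y x L w b + s * loss A Y x L w b'"
    unfolding loss_softplus sum_distrib_left sum.distrib[symmetric]
    by (intro sum_mono) (simp add: algebra_simps)
qed simp

lemma continuous_on_loss: "continuous_on S (loss A Y x L w)"
  unfolding loss_softplus[abs_def]
  by (intro continuous_intros continuous_on_compose2[OF continuous_on_softplus]) auto

lemma outer_mult_vec: "outer u u' *v v = (u' \<bullet> v) *\<^sub>R u"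
  by (simp add: vec_eq_iff outer_def matrix_vector_mult_def inner_vec_def sum_distrib_left algebra_simps)

lemma quadratic_form_obs_info:
  "v \<bullet> (obs_info A x L w b *v v) =
    (\<Sum>l\<in>{1..L}. sigmoid_deriv (b \<bullet> xt (A l w) (x l)) * (v \<bullet> xt (A l w) (x l))\<^sup>2)"
proof -
  have "obs_info A x L w b *v v = (\<Sum>l\<in>{1..L}.
      sigmoid_deriv (b \<bullet> xt (A l w) (x l)) *\<^sub>R (outer (xt (A l w) (x l)) (xt (A l w) (x l)) *v v))"
    unfolding obs_info_def by (induction L) (simp_all add: matrix_vector_mult_add_rdistrib scaleR_matrix_vector_assoc)
  then show ?thesis
    by (simp add: outer_mult_vec inner_sum_right power2_eq_square inner_commute mult.assoc)
qed

lemma inner_score: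
  "v \<bullet> score A Y x L w b =
    (\<Sum>l\<in>{1..L}. (of_bool (Y l w) - sigmoid (b \<bullet> xt (A l w) (x l))) * (v \<bullet> xt (A l w) (x l)))"
  unfolding score_def by (simp add: inner_sum_right)

text \<open>The factor \<open>1 / (2 * exp R)\<close> combines the curvature of softplus on \<open>[-R, R]\<close>
  with \<open>sigmoid_deriv \<le> 1 / 4\<close>.\<close>

lemma loss_increment_lower_bound:
  assumes "\<forall>l\<in>{1..L}. \<bar>b \<bullet> xt (A l w) (x l)\<bar> \<le> R \<and> \<bar>b' \<bullet> xt (A l w) (x l)\<bar> \<le> R"
  shows "(b' - b) \<bullet> (obs_info A x L w b *v (b' - b)) / (2 * exp R) - (b' - b) \<bullet> score A Y x L w b
      \<le> loss A Y x L w b' - loss A Y x L w b"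
proof -
  have step: "sigmoid_deriv t * u\<^sup>2 / (2 * exp R) - (y - sigmoid t) * u
      \<le> softplus (t + u) - y * (t + u) - (softplus t - y * t)"
    if "\<bar>t\<bar> \<le> R" "\<bar>t + u\<bar> \<le> R" for t u y
  proof -
    have "sigmoid_deriv t * u\<^sup>2 / (2 * exp R) \<le> 1 / 4 * u\<^sup>2 / (2 * exp R)"
      using sigmoid_deriv_le[of t] by (intro divide_right_mono mult_right_mono) auto
    then show ?thesis
      using softplus_second_order_lower_bound[OF that] by (simp add: algebra_simps)
  qed
  show ?thesis
    unfolding quadratic_form_obs_info inner_score loss_softplus sum_divide_distrib sum_subtractf[symmetric]
  proof (intro sum_mono)
    fix l assume "l \<in> {1..L}"
    moreover have "b' \<bullet> xt (A l w) (x l) = b \<bullet> xt (A l w) (x l) + (b' - b) \<bullet> xt (A l w) (x l)"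
      by (simp add: inner_diff_left)
    ultimately show "sigmoid_deriv (b \<bullet> xt (A l w) (x l)) * ((b' - b) \<bullet> xt (A l w) (x l))\<^sup>2 / (2 * exp R)
        - (of_bool (Y l w) - sigmoid (b \<bullet> xt (A l w) (x l))) * ((b' - b) \<bullet> xt (A l w) (x l))
      \<le> softplus (b' \<bullet> xt (A l w) (x l)) - of_bool (Y l w) * (b' \<bullet> xt (A l w) (x l))
        - (softplus (b \<bullet> xt (A l w) (x l)) - of_bool (Y l w) * (b \<bullet> xt (A l w) (x l)))"
      using assms step by metis
  qed
qed

lemma loss_less_on_sphere:
  assumes bounds: "\<forall>l\<in>{1..L}. \<bar>bstar \<bullet> xt (A l w) (x l)\<bar> \<le> C \<and> norm (xt (A l w) (x l)) \<le> B"
    and curvature: "\<kappa> * (norm (b - bstar))\<^sup>2 \<le> (b - bstar) \<bullet> (obs_info A x L w bstar *v (b - bstar))"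
    and score: "norm (score A Y x L w bstar) < \<kappa> * \<epsilon> / (2 * exp (C + \<epsilon> * B))"
    and "norm (b - bstar) = \<epsilon>" "0 < \<epsilon>"
  shows "loss A Y x L w bstar < loss A Y x L w b"
proof -
  define R where "R = C + \<epsilon> * B"
  have "\<bar>bstar \<bullet> xt (A l w) (x l)\<bar> \<le> R \<and> \<bar>b \<bullet> xt (A l w) (x l)\<bar> \<le> R" if "l \<in> {1..L}" for l
  proof -
    have "\<bar>(b - bstar) \<bullet> xt (A l w) (x l)\<bar> \<le> \<epsilon> * B"
      using Cauchy_Schwarz_ineq2[of "b - bstar" "xt (A l w) (x l)"] bounds that \<open>norm (b - bstar) = \<epsilon>\<close> \<open>0 < \<epsilon>\<close>
      by (smt (verit) mult_left_mono)
    moreover have "\<bar>bstar \<bullet> xt (A l w) (x l)\<bar> \<le> C" and "norm (xt (A l w) (x l)) \<le> B"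
      using bounds that by auto
    moreover from this(2) have "0 \<le> B"
      by (meson norm_ge_zero order_trans)
    moreover have "0 \<le> \<epsilon> * B"
      using \<open>0 \<le> B\<close> \<open>0 < \<epsilon>\<close> by simp
    ultimately show ?thesis
      unfolding R_def inner_diff_left by linarith
  qed
  then have "(b - bstar) \<bullet> (obs_info A x L w bstar *v (b - bstar)) / (2 * exp R)
      - (b - bstar) \<bullet> score A Y x L w bstar \<le> loss A Y x L w b - loss A Y x L w bstar"
    by (intro loss_increment_lower_bound) blast
  moreover have "(b - bstar) \<bullet> score A Y x L w bstar < \<kappa> * \<epsilon>\<^sup>2 / (2 * exp R)"
  proof -
    have "(b - bstar) \<bullet> score A Y x L w bstar \<le> \<epsilon> * norm (score A Y x L w bstar)"
      using norm_cauchy_schwarz[of "b - bstar"] \<open>norm (b - bstar) = \<epsilon>\<close> by simp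
    also have "\<dots> < \<epsilon> * (\<kappa> * \<epsilon> / (2 * exp R))"
      using score \<open>0 < \<epsilon>\<close> unfolding R_def by (intro mult_strict_left_mono)
    finally show ?thesis
      by (simp add: power2_eq_square mult.left_commute)
  qed
  moreover have "\<kappa> * \<epsilon>\<^sup>2 / (2 * exp R) \<le> (b - bstar) \<bullet> (obs_info A x L w bstar *v (b - bstar)) / (2 * exp R)"
    using curvature \<open>norm (b - bstar) = \<epsilon>\<close> by (simp add: divide_right_mono)
  ultimately show ?thesis
    by linarith
qed

section \<open>Quadratic forms\<close>

lemma quadratic_form_scaleR:
  fixes Q :: "real ^ 'n::finite ^ 'n"
  shows "(c *\<^sub>R v) \<bullet> (Q *v (c *\<^sub>R v)) = c\<^sup>2 * (v \<bullet> (Q *v v))"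
  by (simp add: matrix_vector_mult_scaleR power2_eq_square)

lemma quadratic_form_coercive_on_subspace:
  fixes Q :: "real ^ 'n::finite ^ 'n"
  assumes "subspace S" and pos: "\<forall>v\<in>S. v \<noteq> 0 \<longrightarrow> 0 < v \<bullet> (Q *v v)"
  shows "\<exists>\<mu>>0. \<forall>v\<in>S. \<mu> * (norm v)\<^sup>2 \<le> v \<bullet> (Q *v v)"
proof -
  define K where "K = S \<inter> sphere 0 1"
  have homogeneous: "\<mu> * (norm v)\<^sup>2 \<le> v \<bullet> (Q *v v)" if K: "\<forall>u\<in>K. \<mu> \<le> u \<bullet> (Q *v u)" and "v \<in> S" for \<mu> v
  proof (cases "v = 0")
    case False
    have "(1 / norm v) *\<^sub>R v \<in> K"
      unfolding K_def using \<open>v \<in> S\<close> \<open>subspace S\<close> False by (simp add: subspace_scale)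
    then have "\<mu> \<le> (1 / norm v)\<^sup>2 * (v \<bullet> (Q *v v))"
      using K quadratic_form_scaleR by metis
    then show ?thesis
      using False by (simp add: field_simps power2_eq_square)
  qed simp
  show ?thesis
  proof (cases "K = {}")
    case True
    then show ?thesis
      using homogeneous[of 1] by (intro exI[of _ 1]) auto
  next
    case False
    have "compact K"
      unfolding K_def using \<open>subspace S\<close> by (intro closed_Int_compact closed_subspace compact_sphere)
    moreover have "continuous_on K (\<lambda>u. u \<bullet> (Q *v u))"
      by (intro continuous_intros linear_continuous_on bounded_linear.linear) simp
    ultimately obtain u0 where "u0 \<in> K" and "\<forall>u\<in>K. u0 \<bullet> (Q *v u0) \<le> u \<bullet> (Q *v u)"
      using continuous_attains_inf[OF _ False] by blast
    moreover have "0 < u0 \<bullet> (Q *v u0)"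
      using \<open>u0 \<in> K\<close> pos unfolding K_def by auto
    ultimately show ?thesis
      using homogeneous by blast
  qed
qed

lemma quadratic_form_abs_le:
  fixes D :: "real ^ 'n::finite ^ 'n"
  assumes "\<And>i j. \<bar>D $ i $ j\<bar> \<le> c"
  shows "\<bar>v \<bullet> (D *v v)\<bar> \<le> (real CARD('n))\<^sup>2 * c * (norm v)\<^sup>2"
proof -
  have "\<bar>v \<bullet> (D *v v)\<bar> \<le> norm v * norm (D *v v)"
    by (rule Cauchy_Schwarz_ineq2)
  also have "\<dots> \<le> norm v * (onorm ((*v) D) * norm v)"
    by (simp add: onorm mult_left_mono)
  also have "\<dots> \<le> norm v * (real CARD('n) * real CARD('n) * c * norm v)"
    using onorm_le_matrix_component[of D c] assms by (simp add: mult_left_mono mult_right_mono)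
  finally show ?thesis
    by (simp add: power2_eq_square algebra_simps)
qed

lemma quadratic_form_abs_le_norm:
  fixes D :: "real ^ 'n::finite ^ 'n"
  shows "\<bar>v \<bullet> (D *v v)\<bar> \<le> (real CARD('n))\<^sup>2 * norm D * (norm v)\<^sup>2"
proof (rule quadratic_form_abs_le)
  show "\<bar>D $ i $ j\<bar> \<le> norm D" for i j
    using Finite_Cartesian_Product.norm_nth_le[where x = D and i = i] component_le_norm_cart[where x = "D $ i" and i = j]
    by linarith
qed

lemma eventually_quadratic_form_lower_bound:
  fixes I :: "nat \<Rightarrow> real ^ 'n::finite ^ 'n"
  assumes "subspace S" and lim: "(\<lambda>L. (1 / real L) *\<^sub>R I L) \<longlonglongrightarrow> Ibar"
    and pos: "\<forall>v\<in>S. v \<noteq> 0 \<longrightarrow> 0 < v \<bullet> (Ibar *v v)"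
  obtains \<mu> where "0 < \<mu>" "\<forall>\<^sub>F L in sequentially. \<forall>v\<in>S. real L * \<mu> * (norm v)\<^sup>2 \<le> v \<bullet> (I L *v v)"
proof -
  obtain \<mu>0 where "0 < \<mu>0" and coercive0: "\<forall>v\<in>S. \<mu>0 * (norm v)\<^sup>2 \<le> v \<bullet> (Ibar *v v)"
    using quadratic_form_coercive_on_subspace[OF assms(1) pos] by blast
  define \<mu> where "\<mu> = \<mu>0 / 2"
  have "0 < \<mu>" and coercive: "\<forall>v\<in>S. 2 * \<mu> * (norm v)\<^sup>2 \<le> v \<bullet> (Ibar *v v)"
    unfolding \<mu>_def using \<open>0 < \<mu>0\<close> coercive0 by simp_all
  define N where "N = (real CARD('n))\<^sup>2"
  have "0 < N"
    unfolding N_def by simp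
  then have "\<forall>\<^sub>F L in sequentially. dist ((1 / real L) *\<^sub>R I L) Ibar < \<mu> / N"
    using lim \<open>0 < \<mu>\<close> by (simp add: tendsto_iff)
  then have "\<forall>\<^sub>F L in sequentially. \<forall>v\<in>S. real L * \<mu> * (norm v)\<^sup>2 \<le> v \<bullet> (I L *v v)"
    using eventually_gt_at_top[of 0]
  proof eventually_elim
    case (elim L)
    show ?case
    proof
      fix v assume "v \<in> S"
      have "\<bar>v \<bullet> (((1 / real L) *\<^sub>R I L - Ibar) *v v)\<bar> \<le> N * norm ((1 / real L) *\<^sub>R I L - Ibar) * (norm v)\<^sup>2"
        unfolding N_def by (rule quadratic_form_abs_le_norm)
      also have "\<dots> \<le> \<mu> * (norm v)\<^sup>2"
        using elim(1) \<open>0 < N\<close> by (intro mult_right_mono) (simp_all add: dist_norm field_simps)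
      finally have "\<bar>v \<bullet> (((1 / real L) *\<^sub>R I L - Ibar) *v v)\<bar> \<le> \<mu> * (norm v)\<^sup>2" .
      then have "\<bar>(1 / real L) * (v \<bullet> (I L *v v)) - v \<bullet> (Ibar *v v)\<bar> \<le> \<mu> * (norm v)\<^sup>2"
        by (simp add: matrix_vector_mult_diff_rdistrib inner_diff_right scaleR_matrix_vector_assoc[symmetric])
      moreover have "2 * \<mu> * (norm v)\<^sup>2 \<le> v \<bullet> (Ibar *v v)"
        using coercive \<open>v \<in> S\<close> by blast
      ultimately have "\<mu> * (norm v)\<^sup>2 \<le> (1 / real L) * (v \<bullet> (I L *v v))"
        by linarith
      then show "real L * \<mu> * (norm v)\<^sup>2 \<le> v \<bullet> (I L *v v)"
        using elim(2) by (simp add: field_simps)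
    qed
  qed
  with \<open>0 < \<mu>\<close> show ?thesis
    by (rule that)
qed

section \<open>Minimisers of convex functions and the maximum likelihood estimator\<close>

lemma convex_on_less_beyond_sphere:
  fixes f :: "'a::real_normed_vector \<Rightarrow> real"
  assumes "convex_on S f" "x0 \<in> S" "0 < \<epsilon>"
    and sphere: "\<And>y. y \<in> S \<Longrightarrow> norm (y - x0) = \<epsilon> \<Longrightarrow> f x0 < f y"
    and "y \<in> S" "\<epsilon> < norm (y - x0)"
  shows "f x0 < f y"
proof -
  define s where "s = \<epsilon> / norm (y - x0)"
  have "0 < norm (y - x0)"
    using assms by linarith
  then have s: "0 < s" "s < 1"
    unfolding s_def using assms by (simp_all add: field_simps)
  define z where "z = (1 - s) *\<^sub>R x0 + s *\<^sub>R y"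
  have "z \<in> S"
    unfolding z_def using assms s by (intro convexD[OF convex_on_imp_convex[OF assms(1)]]) auto
  moreover have "norm (z - x0) = \<epsilon>"
  proof -
    have "z - x0 = s *\<^sub>R (y - x0)"
      unfolding z_def by (simp add: algebra_simps)
    then show ?thesis
      using s assms(3) \<open>0 < norm (y - x0)\<close> unfolding s_def by simp
  qed
  ultimately have "f x0 < f z"
    by (rule sphere)
  also have "f z \<le> (1 - s) * f x0 + s * f y"
    unfolding z_def using assms s by (intro convex_onD) auto
  finally show ?thesis
    using s by (simp add: algebra_simps)
qed

lemma convex_on_minimizer_in_ball:
  fixes f :: "'a::{real_normed_vector, heine_borel} \<Rightarrow> real"
  assumes "convex_on S f" "closed S" "continuous_on S f" "x0 \<in> S" "0 < \<epsilon>"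
    and sphere: "\<And>y. y \<in> S \<Longrightarrow> norm (y - x0) = \<epsilon> \<Longrightarrow> f x0 < f y"
  shows "(\<exists>x\<in>S. \<forall>y\<in>S. f x \<le> f y) \<and> (\<forall>x\<in>S. (\<forall>y\<in>S. f x \<le> f y) \<longrightarrow> dist x x0 \<le> \<epsilon>)"
proof
  have beyond: "f x0 < f y" if "y \<in> S" "\<not> dist y x0 \<le> \<epsilon>" for y
    using convex_on_less_beyond_sphere[OF assms(1,4,5) sphere] that by (simp add: dist_norm)
  define K where "K = S \<inter> cball x0 \<epsilon>"
  have "compact K" "K \<noteq> {}"
    unfolding K_def using assms by auto
  then obtain x where x: "x \<in> K" "\<forall>y\<in>K. f x \<le> f y"
    using continuous_attains_inf[of K f] continuous_on_subset[OF assms(3)] unfolding K_def by blast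
  have "f x \<le> f x0"
    using x assms unfolding K_def by auto
  then have "\<forall>y\<in>S. f x \<le> f y"
    using x beyond unfolding K_def by (force simp: dist_commute)
  then show "\<exists>x\<in>S. \<forall>y\<in>S. f x \<le> f y"
    using x unfolding K_def by blast
  show "\<forall>x\<in>S. (\<forall>y\<in>S. f x \<le> f y) \<longrightarrow> dist x x0 \<le> \<epsilon>"
    using beyond assms(4) by force
qed

lemma subspace_Theta: "subspace Theta"
  unfolding subspace_def Theta_def by (simp add: sum.distrib sum_distrib_left[symmetric])

lemma is_mle_exists_near:
  fixes bstar :: "('m::finite, 'd::finite) param"
  assumes "bstar \<in> Theta" "0 < \<epsilon>"
    and sphere: "\<forall>b\<in>Theta. norm (b - bstar) = \<epsilon> \<longrightarrow> loss A Y x L w bstar < loss A Y x L w b"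
  shows "(\<exists>b. is_mle A Y x L w b) \<and> (\<forall>b. is_mle A Y x L w b \<longrightarrow> dist b bstar \<le> \<epsilon>)"
proof -
  have "convex_on Theta (loss A Y x L w)"
    by (rule convex_on_subset[OF convex_on_loss subset_UNIV subspace_imp_convex[OF subspace_Theta]])
  from convex_on_minimizer_in_ball[OF this closed_subspace[OF subspace_Theta] continuous_on_loss assms(1,2)]
  have "(\<exists>b\<in>Theta. \<forall>b'\<in>Theta. loss A Y x L w b \<le> loss A Y x L w b') \<and>
      (\<forall>b\<in>Theta. (\<forall>b'\<in>Theta. loss A Y x L w b \<le> loss A Y x L w b') \<longrightarrow> dist b bstar \<le> \<epsilon>)"
    using sphere by blast
  then show ?thesis
    unfolding is_mle_def by blast
qed

lemma is_mle_cong: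
  assumes "\<forall>l\<in>{1..L}. A l w = A l w' \<and> Y l w = Y l w'"
  shows "is_mle A Y x L w = is_mle A Y x L w'"
proof -
  have "loss A Y x L w = loss A Y x L w'"
    using assms unfolding loss_def by (intro ext arg_cong[where f = uminus] sum.cong) auto
  then show ?thesis
    unfolding is_mle_def by simp
qed

section \<open>Probabilistic tools\<close>

lemma sets_Collect_determined_by_prefix:
  fixes X :: "nat \<Rightarrow> 'a \<Rightarrow> 'b::countable"
  assumes meas: "\<And>l. X l \<in> measurable M (count_space UNIV)"
    and determined: "\<And>w w'. w \<in> space M \<Longrightarrow> w' \<in> space M \<Longrightarrow> (\<forall>l\<in>{1..L}. X l w = X l w') \<Longrightarrow> P w = P w'"
  shows "{w \<in> space M. P w} \<in> sets M"
proof -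
  define prefix where "prefix w = map (\<lambda>l. X l w) [1..<Suc L]" for w
  have "(\<lambda>w. map (\<lambda>l. X l w) [1..<n]) \<in> measurable M (count_space UNIV)" for n
  proof (induction n)
    case (Suc n)
    have "(\<lambda>w. xs @ [X n w]) \<in> measurable M (count_space UNIV)" for xs
      using measurable_compose[OF meas[of n] measurable_count_space[of "\<lambda>z. xs @ [z]"]] by simp
    then have "(\<lambda>w. map (\<lambda>l. X l w) [1..<n] @ [X n w]) \<in> measurable M (count_space UNIV)"
      by (rule measurable_compose_countable'[where f = "\<lambda>xs w. xs @ [X n w]", OF _ Suc.IH]) simp_all
    then show ?case
      by (cases "1 \<le> n") simp_all
  qed simp
  then have prefix: "prefix \<in> measurable M (count_space UNIV)"
    unfolding prefix_def .
  have "{w \<in> space M. P w} = prefix -` {xs. \<exists>w'\<in>space M. prefix w' = xs \<and> P w'} \<inter> space M"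
  proof safe
    fix w w' assume w: "w \<in> space M" and w': "w' \<in> space M" "prefix w' = prefix w" "P w'"
    have "\<forall>l\<in>{1..L}. X l w = X l w'"
      using w'(2) unfolding prefix_def map_eq_conv by auto
    then show "P w"
      using determined[OF w w'(1)] w'(3) by blast
  qed auto
  also have "\<dots> \<in> sets M"
    by (rule measurable_sets[OF prefix]) simp
  finally show ?thesis .
qed

lemma (in prob_space) prob_sum_deviation_le_geometric:
  fixes Z :: "nat \<Rightarrow> 'a \<Rightarrow> real"
  assumes indep: "indep_vars (\<lambda>_. borel) Z UNIV"
    and bounded: "\<And>l. AE w in M. \<bar>Z l w\<bar> \<le> c" and "0 < c" "0 \<le> \<delta>"
  shows "prob {w \<in> space M. \<delta> * real L \<le> \<bar>(\<Sum>l\<in>{1..L}. Z l w) - (\<Sum>l\<in>{1..L}. expectation (Z l))\<bar>}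
      \<le> 2 * exp (- \<delta>\<^sup>2 / (2 * c\<^sup>2)) ^ L"
proof (cases "L = 0")
  case False
  interpret Hoeffding_ineq M "{1..L}" Z "\<lambda>_. - c" "\<lambda>_. c" "\<Sum>l\<in>{1..L}. expectation (Z l)"
  proof unfold_locales
    show "indep_vars (\<lambda>_. borel) Z {1..L}"
      using indep by (rule indep_vars_subset) simp
    show "AE w in M. Z l w \<in> {- c..c}" for l
      using bounded[of l] by eventually_elim auto
  qed simp_all
  have widths: "(\<Sum>l\<in>{1..L}. (c - - c)\<^sup>2) = real L * (4 * c\<^sup>2)"
    by (simp add: power2_eq_square algebra_simps)
  have "prob {w \<in> space M. \<delta> * real L \<le> \<bar>(\<Sum>l\<in>{1..L}. Z l w) - (\<Sum>l\<in>{1..L}. expectation (Z l))\<bar>}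
      \<le> 2 * exp (- 2 * (\<delta> * real L)\<^sup>2 / (\<Sum>l\<in>{1..L}. (c - - c)\<^sup>2))"
    using \<open>0 < c\<close> \<open>0 \<le> \<delta>\<close> False by (intro Hoeffding_ineq_abs_ge) (simp_all add: widths)
  also have "- 2 * (\<delta> * real L)\<^sup>2 / (\<Sum>l\<in>{1..L}. (c - - c)\<^sup>2) = real L * (- \<delta>\<^sup>2 / (2 * c\<^sup>2))"
    unfolding widths using False \<open>0 < c\<close> by (simp add: power2_eq_square field_simps)
  finally show ?thesis
    unfolding exp_of_nat_mult .
qed (simp add: prob_space)

lemma (in prob_space) prob_sum_deviation_tendsto_0:
  fixes Z :: "nat \<Rightarrow> 'a \<Rightarrow> real"
  assumes indep: "indep_vars (\<lambda>_. borel) Z UNIV"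
    and bounded: "\<And>l. AE w in M. \<bar>Z l w\<bar> \<le> c" and "0 < \<delta>"
  shows "(\<lambda>L. prob {w \<in> space M. \<delta> * real L \<le>
      \<bar>(\<Sum>l\<in>{1..L}. Z l w) - (\<Sum>l\<in>{1..L}. expectation (Z l))\<bar>}) \<longlonglongrightarrow> 0"
proof -
  define q where "q = exp (- \<delta>\<^sup>2 / (2 * (\<bar>c\<bar> + 1)\<^sup>2))"
  have "AE w in M. \<bar>Z l w\<bar> \<le> \<bar>c\<bar> + 1" for l
    using bounded[of l] by eventually_elim simp
  from prob_sum_deviation_le_geometric[OF indep this _ less_imp_le[OF \<open>0 < \<delta>\<close>]]
  have hoeffding: "prob {w \<in> space M. \<delta> * real L \<le>
      \<bar>(\<Sum>l\<in>{1..L}. Z l w) - (\<Sum>l\<in>{1..L}. expectation (Z l))\<bar>} \<le> 2 * q ^ L" for L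
    unfolding q_def by simp
  have "q < 1"
    unfolding q_def using \<open>0 < \<delta>\<close> by simp
  then have "(\<lambda>L. q ^ L) \<longlonglongrightarrow> 0"
    by (intro LIMSEQ_power_zero) (simp add: q_def)
  from tendsto_mult_right_zero[OF this, of 2]
  have geometric: "(\<lambda>L. 2 * q ^ L) \<longlonglongrightarrow> 0" .
  show ?thesis
  proof (rule tendsto_sandwich[OF _ _ tendsto_const geometric])
    show "\<forall>\<^sub>F L in sequentially. prob {w \<in> space M. \<delta> * real L \<le>
        \<bar>(\<Sum>l\<in>{1..L}. Z l w) - (\<Sum>l\<in>{1..L}. expectation (Z l))\<bar>} \<le> 2 * q ^ L"
      using hoeffding by (intro always_eventually allI)
  qed simp
qed

lemma (in prob_space) prob_tendsto_1_if_eventually_subset: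
  assumes "(\<lambda>L. prob (G L)) \<longlonglongrightarrow> 1" "\<forall>\<^sub>F L in sequentially. G L \<subseteq> T L" "\<And>L. T L \<in> events"
  shows "(\<lambda>L. prob (T L)) \<longlonglongrightarrow> 1"
proof (rule tendsto_sandwich[OF _ _ assms(1) tendsto_const])
  show "\<forall>\<^sub>F L in sequentially. prob (G L) \<le> prob (T L)"
    using assms(2) by eventually_elim (use assms(3) in \<open>auto intro: finite_measure_mono\<close>)
qed simp

lemma (in prob_space) expectation_of_bool: "expectation (\<lambda>w. of_bool (P w)) = prob {w \<in> space M. P w}"
proof -
  have "(\<lambda>w. of_bool (P w) :: real) = indicator {w. P w}"
    by (simp add: fun_eq_iff indicator_def)
  then show ?thesis
    using Bochner_Integration.integral_indicator[of M "{w. P w}"] by (simp add: Int_def conj_commute)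
qed

lemma (in prob_space) expectation_finite_range:
  fixes Z :: "'a \<Rightarrow> 'b::finite" and g :: "'b \<Rightarrow> real"
  assumes "Z \<in> measurable M (count_space UNIV)"
  shows "expectation (\<lambda>w. g (Z w)) = (\<Sum>z\<in>UNIV. g z * prob {w \<in> space M. Z w = z})"
proof -
  have events: "{w \<in> space M. Z w = z} \<in> events" for z
    using measurable_sets[OF assms, of "{z}"] by (simp add: vimage_def Int_def conj_commute)
  have "expectation (\<lambda>w. g (Z w)) = expectation (\<lambda>w. \<Sum>z\<in>UNIV. g z * indicator {w \<in> space M. Z w = z} w)"
    by (intro Bochner_Integration.integral_cong refl) (simp add: indicator_def if_distrib[of "(*) _"])
  also have "\<dots> = (\<Sum>z\<in>UNIV. g z * prob {w \<in> space M. Z w = z})"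
    using events
    by (subst Bochner_Integration.integral_sum) (auto simp: Int_absorb2 emeasure_eq_measure)
  finally show ?thesis .
qed

section \<open>The sampling model\<close>

locale pairwise_comparison_sampling = prob_space M
  for M :: "'w measure" and A :: "nat \<Rightarrow> 'w \<Rightarrow> 'm::finite \<times> 'm" and Y :: "nat \<Rightarrow> 'w \<Rightarrow> bool"
    and x :: "nat \<Rightarrow> real ^ 'd::finite" and E :: "('m \<times> 'm) set" and p :: "'m \<times> 'm \<Rightarrow> real"
    and bstar :: "('m, 'd) param" +
  assumes p_sum: "(\<Sum>a\<in>E. p a) = 1"
    and indep: "indep_vars (\<lambda>_. count_space UNIV) (\<lambda>l w. (A l w, Y l w)) UNIV"
    and law1: "\<forall>l. \<forall>a\<in>E. prob {w \<in> space M. A l w = a \<and> Y l w} = p a * sigmoid (bstar \<bullet> xt a (x l))"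
    and law0: "\<forall>l. \<forall>a\<in>E. prob {w \<in> space M. A l w = a \<and> \<not> Y l w} = p a * (1 - sigmoid (bstar \<bullet> xt a (x l)))"
begin

lemma measurable_observation: "(\<lambda>w. (A l w, Y l w)) \<in> measurable M (count_space UNIV)"
  using indep unfolding indep_vars_def by auto

lemma sets_Collect_determined_by_observations:
  assumes "\<And>w w'. \<forall>l\<in>{1..L}. A l w = A l w' \<and> Y l w = Y l w' \<Longrightarrow> f w = f w'"
  shows "{w \<in> space M. P (f w)} \<in> events"
proof (rule sets_Collect_determined_by_prefix[where X = "\<lambda>l w. (A l w, Y l w)" and L = L])
  show "(\<lambda>w. (A l w, Y l w)) \<in> measurable M (count_space UNIV)" for l
    by (rule measurable_observation)
  fix w w' assume "\<forall>l\<in>{1..L}. (A l w, Y l w) = (A l w', Y l w')"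
  then have "f w = f w'"
    by (intro assms) auto
  then show "P (f w) = P (f w')"
    by simp
qed

text \<open>The mass outside \<open>E\<close> vanishes because the masses on \<open>E\<close> already add up to one.\<close>

lemma prob_observation:
  "prob {w \<in> space M. (A l w, Y l w) = z} = (if fst z \<in> E then
    p (fst z) * (if snd z then sigmoid (bstar \<bullet> xt (fst z) (x l)) else 1 - sigmoid (bstar \<bullet> xt (fst z) (x l)))
    else 0)"
proof -
  define q where "q z = prob {w \<in> space M. (A l w, Y l w) = z}" for z
  have on_E: "q (a, y) = p a * (if y then sigmoid (bstar \<bullet> xt a (x l)) else 1 - sigmoid (bstar \<bullet> xt a (x l)))"
    if "a \<in> E" for a y
    using law1 law0 that unfolding q_def by (cases y) simp_all
  have "(\<Sum>z\<in>UNIV. q z) = 1"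
    using expectation_finite_range[OF measurable_observation, of "\<lambda>_. 1" l] prob_space unfolding q_def by simp
  moreover have "(\<Sum>z\<in>E \<times> UNIV. q z) = 1"
    using p_sum by (simp add: sum.cartesian_product' UNIV_bool on_E algebra_simps)
  ultimately have "(\<Sum>z\<in>UNIV - E \<times> UNIV. q z) = 0"
    by (simp add: sum_diff)
  moreover have "0 \<le> q z" for z
    unfolding q_def by (rule measure_nonneg)
  ultimately have "q z = 0" if "fst z \<notin> E" for z
    using that sum_nonneg_eq_0_iff[of "UNIV - E \<times> UNIV" q] by (auto simp: mem_Times_iff)
  then show ?thesis
    using on_E[of "fst z" "snd z"] unfolding q_def by auto
qed

lemma expectation_observation:
  "expectation (\<lambda>w. g (A l w, Y l w)) = (\<Sum>a\<in>E. p a *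
    (sigmoid (bstar \<bullet> xt a (x l)) * g (a, True) + (1 - sigmoid (bstar \<bullet> xt a (x l))) * g (a, False)))"
proof -
  have "expectation (\<lambda>w. g (A l w, Y l w)) = (\<Sum>z\<in>UNIV. g z * prob {w \<in> space M. (A l w, Y l w) = z})"
    by (rule expectation_finite_range[OF measurable_observation])
  also have "\<dots> = (\<Sum>z\<in>UNIV. g z * (if fst z \<in> E then
      p (fst z) * (if snd z then sigmoid (bstar \<bullet> xt (fst z) (x l)) else 1 - sigmoid (bstar \<bullet> xt (fst z) (x l)))
      else 0))"
    by (simp only: prob_observation)
  also have "\<dots> = (\<Sum>z\<in>E \<times> UNIV. g z * (if fst z \<in> E then
      p (fst z) * (if snd z then sigmoid (bstar \<bullet> xt (fst z) (x l)) else 1 - sigmoid (bstar \<bullet> xt (fst z) (x l)))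
      else 0))"
    by (intro sum.mono_neutral_right) auto
  also have "\<dots> = (\<Sum>a\<in>E. p a *
      (sigmoid (bstar \<bullet> xt a (x l)) * g (a, True) + (1 - sigmoid (bstar \<bullet> xt a (x l))) * g (a, False)))"
    by (simp add: sum.cartesian_product' UNIV_bool algebra_simps)
  finally show ?thesis .
qed

lemma AE_observation_in_E: "AE w in M. A l w \<in> E"
proof -
  have "prob {w \<in> space M. A l w \<in> E} = expectation (\<lambda>w. of_bool (fst (A l w, Y l w) \<in> E))"
    by (simp add: expectation_of_bool)
  also have "\<dots> = 1"
    using expectation_observation[of "\<lambda>z. of_bool (fst z \<in> E)" l] p_sum by (simp add: algebra_simps)
  finally have "AE w in M. w \<in> {w \<in> space M. A l w \<in> E}"
    by (rule AE_prob_1)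
  then show ?thesis
    by eventually_elim simp
qed

lemma weak_law_observation:
  assumes bounded: "\<And>l a y. a \<in> E \<Longrightarrow> \<bar>g l (a, y)\<bar> \<le> c" and "0 < \<delta>"
  shows "(\<lambda>L. prob {w \<in> space M. \<delta> * real L \<le> \<bar>(\<Sum>l\<in>{1..L}. g l (A l w, Y l w))
      - (\<Sum>l\<in>{1..L}. expectation (\<lambda>w. g l (A l w, Y l w)))\<bar>}) \<longlonglongrightarrow> 0"
proof (rule prob_sum_deviation_tendsto_0)
  show "indep_vars (\<lambda>_. borel) (\<lambda>l w. g l (A l w, Y l w)) UNIV"
    using indep_vars_compose2[OF indep, of "\<lambda>l z. g l z" "\<lambda>_. borel"] by simp
  show "AE w in M. \<bar>g l (A l w, Y l w)\<bar> \<le> c" for l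
    using AE_observation_in_E[of l] by eventually_elim (rule bounded)
qed fact

definition typical_sample :: "real \<Rightarrow> nat \<Rightarrow> 'w set" where
  "typical_sample \<delta> L = {w \<in> space M. (\<forall>l\<in>{1..L}. A l w \<in> E) \<and>
     (\<forall>k. \<bar>score A Y x L w bstar $ k\<bar> < \<delta> * real L) \<and>
     (\<forall>i j. \<bar>(obs_info A x L w bstar - info p E x L bstar) $ i $ j\<bar> < \<delta> * real L)}"

definition score_deviation :: "real \<Rightarrow> nat \<Rightarrow> 'm + 'm \<times> 'd \<Rightarrow> 'w set" where
  "score_deviation \<delta> L k = {w \<in> space M. \<delta> * real L \<le> \<bar>score A Y x L w bstar $ k\<bar>}"

definition info_deviation :: "real \<Rightarrow> nat \<Rightarrow> ('m + 'm \<times> 'd) \<times> ('m + 'm \<times> 'd) \<Rightarrow> 'w set" where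
  "info_deviation \<delta> L ij = {w \<in> space M. \<delta> * real L \<le>
     \<bar>(obs_info A x L w bstar - info p E x L bstar) $ fst ij $ snd ij\<bar>}"

lemma atypical_sample_eq:
  "space M - typical_sample \<delta> L = {w \<in> space M. \<exists>l\<in>{1..L}. A l w \<notin> E}
     \<union> (\<Union>k. score_deviation \<delta> L k) \<union> (\<Union>ij. info_deviation \<delta> L ij)"
  unfolding typical_sample_def score_deviation_def info_deviation_def by (auto simp: not_less) (meson leD)+

lemma sets_score_deviation: "score_deviation \<delta> L k \<in> events"
  unfolding score_deviation_def by (rule sets_Collect_determined_by_observations[where L = L]) (rule score_cong)

lemma sets_info_deviation: "info_deviation \<delta> L ij \<in> events"
  unfolding info_deviation_def by (rule sets_Collect_determined_by_observations[where L = L]) (simp add: obs_info_cong)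

lemma prob_typical_sample_ge:
  "1 - ((\<Sum>k\<in>UNIV. prob (score_deviation \<delta> L k)) + (\<Sum>ij\<in>UNIV. prob (info_deviation \<delta> L ij)))
    \<le> prob (typical_sample \<delta> L)"
proof -
  define N where "N = {w \<in> space M. \<exists>l\<in>{1..L}. A l w \<notin> E}"
  have "N \<in> events"
    unfolding N_def by (rule sets_Collect_determined_by_observations[where L = L]) auto
  have "prob N = 0"
    unfolding N_def by (rule prob_eq_0_AE) (simp add: AE_finite_allI AE_observation_in_E)
  have "(\<Union>k. score_deviation \<delta> L k) \<in> events" "(\<Union>ij. info_deviation \<delta> L ij) \<in> events"
    using sets_score_deviation sets_info_deviation by auto
  with \<open>N \<in> events\<close> have "space M - typical_sample \<delta> L \<in> events"
    unfolding atypical_sample_eq N_def[symmetric] by auto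
  moreover have "typical_sample \<delta> L = space M - (space M - typical_sample \<delta> L)"
    unfolding typical_sample_def by blast
  ultimately have "typical_sample \<delta> L \<in> events"
    by (metis sets.Diff sets.top)
  have "prob (space M - typical_sample \<delta> L)
      = prob (N \<union> (\<Union>k. score_deviation \<delta> L k) \<union> (\<Union>ij. info_deviation \<delta> L ij))"
    unfolding atypical_sample_eq N_def ..
  also have "\<dots> \<le> prob N + prob (\<Union>k. score_deviation \<delta> L k) + prob (\<Union>ij. info_deviation \<delta> L ij)"
    using \<open>N \<in> events\<close> \<open>(\<Union>k. score_deviation \<delta> L k) \<in> events\<close> \<open>(\<Union>ij. info_deviation \<delta> L ij) \<in> events\<close>
    by (intro order_trans[OF measure_Un_le] add_right_mono measure_Un_le) auto
  also have "\<dots> \<le> 0 + (\<Sum>k\<in>UNIV. prob (score_deviation \<delta> L k)) + (\<Sum>ij\<in>UNIV. prob (info_deviation \<delta> L ij))"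
    using \<open>prob N = 0\<close> sets_score_deviation sets_info_deviation
    by (intro add_mono finite_measure_subadditive_finite) auto
  finally show ?thesis
    using prob_compl[OF \<open>typical_sample \<delta> L \<in> events\<close>] by simp
qed

lemma prob_score_deviation_tendsto_0:
  assumes "\<forall>l. \<forall>a\<in>E. norm (xt a (x l)) < B" "0 < \<delta>"
  shows "(\<lambda>L. prob (score_deviation \<delta> L k)) \<longlonglongrightarrow> 0"
proof -
  define g where "g l z = (of_bool (snd z) - sigmoid (bstar \<bullet> xt (fst z) (x l))) * xt (fst z) (x l) $ k" for l z
  have "expectation (\<lambda>w. g l (A l w, Y l w)) = 0" for l
    unfolding expectation_observation by (simp add: g_def algebra_simps)
  then have "score A Y x L w bstar $ k =
      (\<Sum>l\<in>{1..L}. g l (A l w, Y l w)) - (\<Sum>l\<in>{1..L}. expectation (\<lambda>w. g l (A l w, Y l w)))" for L w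
    unfolding score_component g_def by simp
  moreover have "\<bar>g l (a, y)\<bar> \<le> B" if "a \<in> E" for l a y
  proof -
    have "\<bar>of_bool y - sigmoid (bstar \<bullet> xt a (x l))\<bar> \<le> 1"
      using sigmoid_pos[of "bstar \<bullet> xt a (x l)"] sigmoid_less_1[of "bstar \<bullet> xt a (x l)"] by (cases y) auto
    moreover have "\<bar>xt a (x l) $ k\<bar> \<le> B"
      using component_le_norm_cart[of "xt a (x l)" k] assms(1) that by (meson less_imp_le order_trans)
    ultimately have "\<bar>of_bool y - sigmoid (bstar \<bullet> xt a (x l))\<bar> * \<bar>xt a (x l) $ k\<bar> \<le> 1 * B"
      by (intro mult_mono) auto
    then show ?thesis
      unfolding g_def abs_mult by simp
  qed
  ultimately show ?thesis
    unfolding score_deviation_def using weak_law_observation[of g B \<delta>] assms(2) by simp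
qed

lemma prob_info_deviation_tendsto_0:
  assumes "\<forall>l. \<forall>a\<in>E. norm (xt a (x l)) < B" "0 < \<delta>"
  shows "(\<lambda>L. prob (info_deviation \<delta> L ij)) \<longlonglongrightarrow> 0"
proof -
  obtain i j where ij: "ij = (i, j)"
    by fastforce
  define g :: "nat \<Rightarrow> ('m \<times> 'm) \<times> bool \<Rightarrow> real"
    where "g l z = sigmoid_deriv (bstar \<bullet> xt (fst z) (x l)) * (xt (fst z) (x l) $ i * xt (fst z) (x l) $ j)"
    for l z
  have "(\<Sum>l\<in>{1..L}. expectation (\<lambda>w. g l (A l w, Y l w))) = info p E x L bstar $ i $ j" for L
    unfolding expectation_observation info_component by (simp add: g_def algebra_simps)
  then have "(obs_info A x L w bstar - info p E x L bstar) $ i $ j =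
      (\<Sum>l\<in>{1..L}. g l (A l w, Y l w)) - (\<Sum>l\<in>{1..L}. expectation (\<lambda>w. g l (A l w, Y l w)))" for L w
    by (simp add: obs_info_component g_def)
  moreover have "\<bar>g l (a, y)\<bar> \<le> B\<^sup>2" if "a \<in> E" for l a y
  proof -
    have "\<bar>sigmoid_deriv (bstar \<bullet> xt a (x l))\<bar> \<le> 1"
      using sigmoid_deriv_nonneg[of "bstar \<bullet> xt a (x l)"] sigmoid_deriv_le[of "bstar \<bullet> xt a (x l)"] by simp
    moreover have "\<bar>xt a (x l) $ i\<bar> \<le> B" "\<bar>xt a (x l) $ j\<bar> \<le> B"
      using component_le_norm_cart[of "xt a (x l)"] assms(1) that by (meson less_imp_le order_trans)+
    ultimately have "\<bar>sigmoid_deriv (bstar \<bullet> xt a (x l))\<bar> * (\<bar>xt a (x l) $ i\<bar> * \<bar>xt a (x l) $ j\<bar>) \<le> 1 * (B * B)"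
      by (intro mult_mono) auto
    then show ?thesis
      unfolding g_def abs_mult power2_eq_square by simp
  qed
  ultimately show ?thesis
    unfolding info_deviation_def ij using weak_law_observation[of g "B\<^sup>2" \<delta>] assms(2) by simp
qed

lemma prob_typical_sample_tendsto_1:
  assumes "\<forall>l. \<forall>a\<in>E. norm (xt a (x l)) < B" "0 < \<delta>"
  shows "(\<lambda>L. prob (typical_sample \<delta> L)) \<longlonglongrightarrow> 1"
proof (rule tendsto_sandwich[OF _ _ _ tendsto_const])
  have "(\<lambda>L. 1 - ((\<Sum>k\<in>UNIV. prob (score_deviation \<delta> L k)) + (\<Sum>ij\<in>UNIV. prob (info_deviation \<delta> L ij))))
      \<longlonglongrightarrow> 1 - (0 + 0)"
    using assms
    by (intro tendsto_intros tendsto_null_sum prob_score_deviation_tendsto_0 prob_info_deviation_tendsto_0)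
  then show "(\<lambda>L. 1 - ((\<Sum>k\<in>UNIV. prob (score_deviation \<delta> L k)) + (\<Sum>ij\<in>UNIV. prob (info_deviation \<delta> L ij))))
      \<longlonglongrightarrow> 1"
    by simp
  show "\<forall>\<^sub>F L in sequentially. 1 - ((\<Sum>k\<in>UNIV. prob (score_deviation \<delta> L k)) + (\<Sum>ij\<in>UNIV. prob (info_deviation \<delta> L ij)))
      \<le> prob (typical_sample \<delta> L)"
    using prob_typical_sample_ge by (intro always_eventually allI)
qed simp

lemma typical_sample_curvature:
  assumes "w \<in> typical_sample \<delta> L"
    and info: "\<forall>v\<in>Theta. real L * \<mu> * (norm v)\<^sup>2 \<le> v \<bullet> (info p E x L bstar *v v)"
    and \<delta>: "\<delta> \<le> \<mu> / (2 * (real CARD('m + 'm \<times> 'd))\<^sup>2)" and "v \<in> Theta"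
  shows "real L * \<mu> / 2 * (norm v)\<^sup>2 \<le> v \<bullet> (obs_info A x L w bstar *v v)"
proof -
  define N where "N = real CARD('m + 'm \<times> 'd)"
  have "0 < N"
    unfolding N_def by (simp only: of_nat_0_less_iff zero_less_card_finite)
  have "\<bar>v \<bullet> ((obs_info A x L w bstar - info p E x L bstar) *v v)\<bar> \<le> N\<^sup>2 * (\<delta> * real L) * (norm v)\<^sup>2"
    using assms(1) unfolding typical_sample_def N_def by (intro quadratic_form_abs_le) (auto intro: less_imp_le)
  also have "\<dots> \<le> real L * \<mu> / 2 * (norm v)\<^sup>2"
  proof -
    have "N\<^sup>2 * \<delta> \<le> \<mu> / 2"
      using \<delta> \<open>0 < N\<close> unfolding N_def[symmetric] by (simp add: field_simps)
    from mult_right_mono[OF this, of "real L"] show ?thesis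
      by (intro mult_right_mono) (simp_all add: algebra_simps)
  qed
  finally have "\<bar>v \<bullet> (obs_info A x L w bstar *v v) - v \<bullet> (info p E x L bstar *v v)\<bar> \<le> real L * \<mu> / 2 * (norm v)\<^sup>2"
    by (simp add: matrix_vector_mult_diff_rdistrib inner_diff_right)
  moreover have "real L * \<mu> * (norm v)\<^sup>2 \<le> v \<bullet> (info p E x L bstar *v v)"
    using info \<open>v \<in> Theta\<close> by blast
  moreover have "real L * \<mu> * (norm v)\<^sup>2 = 2 * (real L * \<mu> / 2 * (norm v)\<^sup>2)"
    by simp
  ultimately show ?thesis
    by linarith
qed

lemma typical_sample_norm_score:
  assumes "w \<in> typical_sample \<delta> L"
  shows "norm (score A Y x L w bstar) < real CARD('m + 'm \<times> 'd) * \<delta> * real L"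
proof -
  have "norm (score A Y x L w bstar) \<le> (\<Sum>k\<in>UNIV. \<bar>score A Y x L w bstar $ k\<bar>)"
    by (rule norm_le_l1_cart)
  also have "\<dots> < (\<Sum>k\<in>(UNIV :: ('m + 'm \<times> 'd) set). \<delta> * real L)"
    using assms unfolding typical_sample_def by (intro sum_strict_mono) auto
  finally show ?thesis
    by simp
qed

lemma typical_sample_mle_near:
  defines "N \<equiv> real CARD('m + 'm \<times> 'd)"
  assumes w: "w \<in> typical_sample \<delta> L"
    and norm_bound: "\<forall>l. \<forall>a\<in>E. norm (xt a (x l)) < B"
    and inner_bound: "\<forall>l. \<forall>a\<in>E. \<bar>bstar \<bullet> xt a (x l)\<bar> \<le> C"
    and info: "\<forall>v\<in>Theta. real L * \<mu> * (norm v)\<^sup>2 \<le> v \<bullet> (info p E x L bstar *v v)"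
    and \<delta>_curvature: "\<delta> \<le> \<mu> / (2 * N\<^sup>2)"
    and \<delta>_score: "\<delta> \<le> \<mu> * \<epsilon> / (4 * N * exp (C + \<epsilon> * B))"
    and "bstar \<in> Theta" "0 < \<epsilon>"
  shows "(\<exists>b. is_mle A Y x L w b) \<and> (\<forall>b. is_mle A Y x L w b \<longrightarrow> dist b bstar \<le> \<epsilon>)"
proof (rule is_mle_exists_near[OF \<open>bstar \<in> Theta\<close> \<open>0 < \<epsilon>\<close>], intro ballI impI)
  fix b :: "('m, 'd) param" assume "b \<in> Theta" "norm (b - bstar) = \<epsilon>"
  show "loss A Y x L w bstar < loss A Y x L w b"
  proof (rule loss_less_on_sphere[where \<kappa> = "real L * \<mu> / 2"])
    show "\<forall>l\<in>{1..L}. \<bar>bstar \<bullet> xt (A l w) (x l)\<bar> \<le> C \<and> norm (xt (A l w) (x l)) \<le> B"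
      using w norm_bound inner_bound unfolding typical_sample_def by (auto intro: less_imp_le)
    show "real L * \<mu> / 2 * (norm (b - bstar))\<^sup>2 \<le> (b - bstar) \<bullet> (obs_info A x L w bstar *v (b - bstar))"
      using subspace_diff[OF subspace_Theta \<open>b \<in> Theta\<close> \<open>bstar \<in> Theta\<close>] \<delta>_curvature
      unfolding N_def by (intro typical_sample_curvature[OF w info])
    have "0 < N"
      unfolding N_def by (simp only: of_nat_0_less_iff zero_less_card_finite)
    with \<delta>_score have "N * \<delta> \<le> \<mu> * \<epsilon> / (4 * exp (C + \<epsilon> * B))"
      by (simp add: field_simps)
    from mult_right_mono[OF this, of "real L"]
    show "norm (score A Y x L w bstar) < real L * \<mu> / 2 * \<epsilon> / (2 * exp (C + \<epsilon> * B))"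
      using typical_sample_norm_score[OF w] unfolding N_def by (simp add: algebra_simps)
  qed fact+
qed

lemma prob_mle_near_tendsto_1:
  assumes "bstar \<in> Theta" "0 < \<epsilon>"
    and norm_bound: "\<forall>l. \<forall>a\<in>E. norm (xt a (x l)) < B"
    and inner_bound: "\<forall>l. \<forall>a\<in>E. \<bar>bstar \<bullet> xt a (x l)\<bar> \<le> C"
    and "0 < \<mu>" and info: "\<forall>\<^sub>F L in sequentially. \<forall>v\<in>Theta. real L * \<mu> * (norm v)\<^sup>2 \<le> v \<bullet> (info p E x L bstar *v v)"
  shows "(\<lambda>L. prob {w \<in> space M. (\<exists>b. is_mle A Y x L w b) \<and> (\<forall>b. is_mle A Y x L w b \<longrightarrow> dist b bstar \<le> \<epsilon>)})
    \<longlonglongrightarrow> 1"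
proof -
  define N where "N = real CARD('m + 'm \<times> 'd)"
  define \<delta> where "\<delta> = min (\<mu> / (2 * N\<^sup>2)) (\<mu> * \<epsilon> / (4 * N * exp (C + \<epsilon> * B)))"
  have "0 < N"
    unfolding N_def by (simp only: of_nat_0_less_iff zero_less_card_finite)
  then have "0 < \<delta>"
    unfolding \<delta>_def using \<open>0 < \<mu>\<close> \<open>0 < \<epsilon>\<close> by simp
  show ?thesis
  proof (rule prob_tendsto_1_if_eventually_subset[OF prob_typical_sample_tendsto_1[OF norm_bound \<open>0 < \<delta>\<close>]])
    show "\<forall>\<^sub>F L in sequentially. typical_sample \<delta> L \<subseteq>
        {w \<in> space M. (\<exists>b. is_mle A Y x L w b) \<and> (\<forall>b. is_mle A Y x L w b \<longrightarrow> dist b bstar \<le> \<epsilon>)}"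
      using info
    proof eventually_elim
      case (elim L)
      have "\<delta> \<le> \<mu> / (2 * N\<^sup>2)" "\<delta> \<le> \<mu> * \<epsilon> / (4 * N * exp (C + \<epsilon> * B))"
        unfolding \<delta>_def by simp_all
      note near = typical_sample_mle_near[OF _ norm_bound inner_bound elim this[unfolded N_def] assms(1,2)]
      show ?case
      proof
        fix w assume "w \<in> typical_sample \<delta> L"
        with near[of w] show "w \<in> {w \<in> space M. (\<exists>b. is_mle A Y x L w b) \<and> (\<forall>b. is_mle A Y x L w b \<longrightarrow> dist b bstar \<le> \<epsilon>)}"
          unfolding typical_sample_def by simp
      qed
    qed
    show "{w \<in> space M. (\<exists>b. is_mle A Y x L w b) \<and> (\<forall>b. is_mle A Y x L w b \<longrightarrow> dist b bstar \<le> \<epsilon>)} \<in> events" for L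
      by (rule sets_Collect_determined_by_observations[where L = L and f = "\<lambda>w. is_mle A Y x L w"]) (rule is_mle_cong)
  qed
qed

end

theorem mainTheorem7:
  fixes M :: "'w measure"
    and A :: "nat \<Rightarrow> 'w \<Rightarrow> 'm::finite \<times> 'm"
    and Y :: "nat \<Rightarrow> 'w \<Rightarrow> bool"
    and x :: "nat \<Rightarrow> real ^ 'd::finite"
    and E :: "('m \<times> 'm) set"
    and p :: "'m \<times> 'm \<Rightarrow> real"
    and bstar :: "('m, 'd) param"
    and Ibar :: "real ^ ('m + 'm \<times> 'd) ^ ('m + 'm \<times> 'd)"
    and B2 :: real
  assumes P: "prob_space M"
    and p_pos: "\<forall>a\<in>E. p a > 0"
    and p_sum: "(\<Sum>a\<in>E. p a) = 1"
    and indep: "prob_space.indep_vars M (\<lambda>_. count_space UNIV) (\<lambda>l w. (A l w, Y l w)) UNIV"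
    and law1: "\<forall>l. \<forall>a\<in>E. measure M {w \<in> space M. A l w = a \<and> Y l w}
                 = p a * sigmoid (bstar \<bullet> xt a (x l))"
    and law0: "\<forall>l. \<forall>a\<in>E. measure M {w \<in> space M. A l w = a \<and> \<not> Y l w}
                 = p a * (1 - sigmoid (bstar \<bullet> xt a (x l)))"
    and bstar_Theta: "bstar \<in> Theta"
    and A1: "graph_connected E"
    and A2: "\<forall>w\<in>space M. \<exists>L0. \<forall>L\<ge>L0. design_full_rank (\<lambda>l. A l w) x L"
    and A3a: "\<forall>l. \<forall>a\<in>E. norm (xt a (x l)) < B2"
    and A3b: "\<exists>C. \<forall>l. \<forall>a\<in>E. \<bar>bstar \<bullet> xt a (x l)\<bar> \<le> C"
    and A4a: "(\<lambda>L. (1 / real L) *\<^sub>R info p E x L bstar) \<longlonglongrightarrow> Ibar"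
    and A4b: "\<forall>v\<in>Theta. v \<noteq> 0 \<longrightarrow> v \<bullet> (Ibar *v v) > 0"
  shows "\<forall>\<epsilon>>0. (\<lambda>L. measure M {w \<in> space M.
            (\<exists>b. is_mle A Y x L w b) \<and>
            (\<forall>b. is_mle A Y x L w b \<longrightarrow> dist b bstar \<le> \<epsilon>)}) \<longlonglongrightarrow> 1"
proof (intro allI impI)
  fix \<epsilon> :: real assume "0 < \<epsilon>"
  interpret pairwise_comparison_sampling M A Y x E p bstar
    using P p_sum indep law1 law0
    by (simp add: pairwise_comparison_sampling_def pairwise_comparison_sampling_axioms_def)
  obtain \<mu> where "0 < \<mu>" and info_bound:
      "\<forall>\<^sub>F L in sequentially. \<forall>v\<in>Theta. real L * \<mu> * (norm v)\<^sup>2 \<le> v \<bullet> (info p E x L bstar *v v)"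
    using eventually_quadratic_form_lower_bound[OF subspace_Theta A4a A4b] by blast
  obtain C where "\<forall>l. \<forall>a\<in>E. \<bar>bstar \<bullet> xt a (x l)\<bar> \<le> C"
    using A3b by blast
  from prob_mle_near_tendsto_1[OF bstar_Theta \<open>0 < \<epsilon>\<close> A3a this \<open>0 < \<mu>\<close> info_bound]
  show "(\<lambda>L. prob {w \<in> space M. (\<exists>b. is_mle A Y x L w b) \<and> (\<forall>b. is_mle A Y x L w b \<longrightarrow> dist b bstar \<le> \<epsilon>)})
      \<longlonglongrightarrow> 1" .
qed

end
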